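(* Let $\mathbb K$ be a field with $2\in\mathbb K^\times$, $A$ a unital commutative associative $\mathbb K$-algebra, $\mathfrak k$ a $\mathbb K$-Lie algebra, and $\mathfrak g=A\otimes\mathfrak k$. With the maps $\Phi$ and $\Psi$ described in the context (which are well-defined linear maps), the sequence $$\{0\}\to \mathrm{Alt}^2(\mathfrak g/\mathfrak g')_{1,3}\oplus \mathrm{Lin}(A,H^2(\mathfrak k))\xrightarrow{\ \Phi\ } H^2(\mathfrak g)\xrightarrow{\ \Psi\ } \mathrm{Lin}\big((\Omega^1(A),d_A(A)),(Z^3(\mathfrak k)_\Gamma,B^3(\mathfrak k)_\Gamma)\big)\to\{0\}$$ is exact.
   Context: $\mathfrak g=A\otimes\mathfrak k$ carries the bracket $[a\otimes x,a'\otimes x']=aa'\otimes[x,x']$; write $ax:=a\otimes x$ and $\mathbf 1$ for the unit of $A$. Put $\mathfrak k'=[\mathfrak k,\mathfrak k]$, $\mathfrak g'=A\otimes\mathfrak k'$, so $\mathfrak g/\mathfrak g'\cong A\otimes(\mathfrak k/\mathfrak k')$. For a vector space $V$, identify $\Lambda^2(V)$, $S^2(V)$ with antisymmetric/symmetric tensors in $V\otimes V$ via $v\wedge w=\tfrac12(v\otimes w-w\otimes v)$, $v\vee w=\tfrac12(v\otimes w+w\otimes v)$. An alternating bilinear map $f$ on $\mathfrak g$ is identified with the linear map on $\Lambda^2(\mathfrak g)$ with $f(u\wedge v)=f(u,v)$. All cohomology here has trivial coefficients $\mathbb K$: $H^2(\mathfrak g)$ is the space of $\mathbb K$-valued Lie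 algebra 2-cocycles on $\mathfrak g$ modulo coboundaries $(u,v)\mapsto-\ell([u,v])$, $\ell\in\mathfrak g^*$; $Z^p(\mathfrak k),B^p(\mathfrak k),H^p(\mathfrak k)$ are the usual Chevalley–Eilenberg cocycles, coboundaries, cohomology of $\mathfrak k$ with trivial coefficients. Decomposition: let $I_A\subseteq S^2(A)$ be the kernel of multiplication $S^2(A)\to A$. Define $p_1:\Lambda^2(\mathfrak g)\to\Lambda^2(A)\otimes S^2(\mathfrak k)$, $p_1(ax\wedge by)=a\wedge b\otimes x\vee y$; $p_2:\Lambda^2(\mathfrak g)\to A\otimes\Lambda^2(\mathfrak k)$, $p_2(ax\wedge by)=ab\otimes x\wedge y$; $p_3:\Lambda^2(\mathfrak g)\to I_A\otimes\Lambda^2(\mathfrak k)$, $p_3(ax\wedge by)=(a\vee b-ab\vee\mathbf 1)\otimes x\wedge y$. Then $(p_1,p_2,p_3)$ is a linear isomorphism onto the direct sum of the three targets. For a linear $f$ on $\Lambda^2(\mathfrak g)$ write $f=f_1\circ p_1+f_2\circ p_2+f_3\circ p_3$ and $\tilde f_1(a,b)(x,y):=f_1(a\wedge b\otimes x\vee y)$. Koszul map: $\mathrm{Sym}^2(\mathfrak k)^{\mathfrak k}$ is the space of invariant symmetric bilinear forms $\kappa$ on $\mathfrak k$ ($\kappa([x,y],z)=\kappa(x,[y,z])$), and $\Gamma(\kappa)(x,y,z):=\kappa([x,y],z)$, $\Gamma:\mathrm{Sym}^2(\mathfrak k)^{\mathfrak k}\to Z^3(\mathfrak k)$. Put $Z^3(\mathfrak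 k)_\Gamma:=\mathrm{im}\,\Gamma$, $B^3(\mathfrak k)_\Gamma:=B^3(\mathfrak k)\cap\mathrm{im}\,\Gamma$. $(\Omega^1(A),d_A)$ is the universal differential module (Kähler differentials) of $A$. For pairs of spaces $X'\subseteq X$, $Y'\subseteq Y$, $\mathrm{Lin}((X,X'),(Y,Y'))=\{f\in\mathrm{Lin}(X,Y):f(X')\subseteq Y'\}$. $\mathrm{Alt}^2(\mathfrak g/\mathfrak g')_{1,3}$ is the space of alternating bilinear forms $\omega$ on $\mathfrak g/\mathfrak g'$ with $\omega(a\bar x,\mathbf 1\bar y)+\omega(\mathbf 1\bar x,a\bar y)=0$ for all $a\in A$, $\bar x,\bar y\in\mathfrak k/\mathfrak k'$. $\Phi(\omega,\phi)=[\omega\circ(q\times q)]+[f_\phi]$, where $q:\mathfrak g\to\mathfrak g/\mathfrak g'$ is the quotient map and $f_\phi(ax,by)=\tilde\phi(ab)(x,y)$ for any linear lift $\tilde\phi:A\to Z^2(\mathfrak k)$ of $\phi$. $\Psi([f])$ is the linear map $\Omega^1(A)\to Z^3(\mathfrak k)_\Gamma$ with $a\,d_A(b)-b\,d_A(a)\mapsto\Gamma(\tilde f_1(a,b))$. *)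

theory Defs
  imports Complex_Main "HOL-Library.Function_Algebras"
begin

definition lin_map ::
  "('k::field \<Rightarrow> 'v::ab_group_add \<Rightarrow> 'v) \<Rightarrow> ('k \<Rightarrow> 'w::ab_group_add \<Rightarrow> 'w) \<Rightarrow> ('v \<Rightarrow> 'w) \<Rightarrow> bool"
  where "lin_map s t f \<longleftrightarrow> (\<forall>x y. f (x + y) = f x + f y) \<and> (\<forall>c x. f (s c x) = t c (f x))"

definition fsc2 :: "'k::field \<Rightarrow> ('x \<Rightarrow> 'y \<Rightarrow> 'k) \<Rightarrow> ('x \<Rightarrow> 'y \<Rightarrow> 'k)"
  where "fsc2 c g = (\<lambda>x y. c * g x y)"
definition fsc3 :: "'k::field \<Rightarrow> ('x \<Rightarrow> 'y \<Rightarrow> 'z \<Rightarrow> 'k) \<Rightarrow> ('x \<Rightarrow> 'y \<Rightarrow> 'z \<Rightarrow> 'k)"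
  where "fsc3 c g = (\<lambda>x y z. c * g x y z)"

definition bilin ::
  "('k::field \<Rightarrow> 'u::ab_group_add \<Rightarrow> 'u) \<Rightarrow> ('k \<Rightarrow> 'v::ab_group_add \<Rightarrow> 'v) \<Rightarrow> ('u \<Rightarrow> 'v \<Rightarrow> 'k) \<Rightarrow> bool"
  where "bilin s1 s2 B \<longleftrightarrow> (\<forall>y. lin_map s1 (*) (\<lambda>x. B x y)) \<and> (\<forall>x. lin_map s2 (*) (B x))"

definition trilin ::
  "('k::field \<Rightarrow> 'u::ab_group_add \<Rightarrow> 'u) \<Rightarrow> ('u \<Rightarrow> 'u \<Rightarrow> 'u \<Rightarrow> 'k) \<Rightarrow> bool"
  where "trilin s T \<longleftrightarrow> (\<forall>y z. lin_map s (*) (\<lambda>x. T x y z)) \<and> (\<forall>x z. lin_map s (*) (\<lambda>y. T x y z))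
           \<and> (\<forall>x y. lin_map s (*) (T x y))"

definition quadlin ::
  "('k::field \<Rightarrow> 'a::ab_group_add \<Rightarrow> 'a) \<Rightarrow> ('k \<Rightarrow> 'l::ab_group_add \<Rightarrow> 'l) \<Rightarrow>
   ('a \<Rightarrow> 'l \<Rightarrow> 'a \<Rightarrow> 'l \<Rightarrow> 'k) \<Rightarrow> bool"
  where "quadlin sA sL F \<longleftrightarrow>
     (\<forall>x b y. lin_map sA (*) (\<lambda>a. F a x b y)) \<and> (\<forall>a b y. lin_map sL (*) (\<lambda>x. F a x b y)) \<and>
     (\<forall>a x y. lin_map sA (*) (\<lambda>b. F a x b y)) \<and> (\<forall>a x b. lin_map sL (*) (\<lambda>y. F a x b y))"

definition comm_algebra :: "('k::field \<Rightarrow> 'a::comm_ring_1 \<Rightarrow> 'a) \<Rightarrow> bool"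
  where "comm_algebra sA \<longleftrightarrow> vector_space sA \<and> (\<forall>c a b. sA c (a * b) = sA c a * b)"

definition lie_algebra :: "('k::field \<Rightarrow> 'l::ab_group_add \<Rightarrow> 'l) \<Rightarrow> ('l \<Rightarrow> 'l \<Rightarrow> 'l) \<Rightarrow> bool"
  where "lie_algebra sL br \<longleftrightarrow> vector_space sL \<and>
     (\<forall>y. lin_map sL sL (\<lambda>x. br x y)) \<and> (\<forall>x. lin_map sL sL (br x)) \<and>
     (\<forall>x. br x x = 0) \<and>
     (\<forall>x y z. br x (br y z) + br y (br z x) + br z (br x y) = 0)"

definition derived :: "('k::field \<Rightarrow> 'l::ab_group_add \<Rightarrow> 'l) \<Rightarrow> ('l \<Rightarrow> 'l \<Rightarrow> 'l) \<Rightarrow> 'l set"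
  where "derived sL br = module.span sL {br x y | x y. True}"

definition alt2 :: "('k::field \<Rightarrow> 'l::ab_group_add \<Rightarrow> 'l) \<Rightarrow> ('l \<Rightarrow> 'l \<Rightarrow> 'k) \<Rightarrow> bool"
  where "alt2 sL \<omega> \<longleftrightarrow> bilin sL sL \<omega> \<and> (\<forall>x. \<omega> x x = 0)"

definition alt3 :: "('k::field \<Rightarrow> 'l::ab_group_add \<Rightarrow> 'l) \<Rightarrow> ('l \<Rightarrow> 'l \<Rightarrow> 'l \<Rightarrow> 'k) \<Rightarrow> bool"
  where "alt3 sL \<theta> \<longleftrightarrow> trilin sL \<theta> \<and>
     (\<forall>x z. \<theta> x x z = 0) \<and> (\<forall>x y. \<theta> x y y = 0) \<and> (\<forall>x y. \<theta> x y x = 0)"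

text \<open>Chevalley--Eilenberg differentials with trivial coefficients.\<close>
definition d2 :: "('l \<Rightarrow> 'l \<Rightarrow> 'l) \<Rightarrow> ('l \<Rightarrow> 'l \<Rightarrow> 'k::field) \<Rightarrow> ('l \<Rightarrow> 'l \<Rightarrow> 'l \<Rightarrow> 'k)"
  where "d2 br \<eta> = (\<lambda>x0 x1 x2. - \<eta> (br x0 x1) x2 + \<eta> (br x0 x2) x1 - \<eta> (br x1 x2) x0)"

definition d3 :: "('l \<Rightarrow> 'l \<Rightarrow> 'l) \<Rightarrow> ('l \<Rightarrow> 'l \<Rightarrow> 'l \<Rightarrow> 'k::field) \<Rightarrow> ('l \<Rightarrow> 'l \<Rightarrow> 'l \<Rightarrow> 'l \<Rightarrow> 'k)"
  where "d3 br \<theta> = (\<lambda>x0 x1 x2 x3.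
      - \<theta> (br x0 x1) x2 x3 + \<theta> (br x0 x2) x1 x3 - \<theta> (br x0 x3) x1 x2
      - \<theta> (br x1 x2) x0 x3 + \<theta> (br x1 x3) x0 x2 - \<theta> (br x2 x3) x0 x1)"

definition Z2 :: "('k::field \<Rightarrow> 'l::ab_group_add \<Rightarrow> 'l) \<Rightarrow> ('l \<Rightarrow> 'l \<Rightarrow> 'l) \<Rightarrow> ('l \<Rightarrow> 'l \<Rightarrow> 'k) \<Rightarrow> bool"
  where "Z2 sL br \<omega> \<longleftrightarrow> alt2 sL \<omega> \<and> d2 br \<omega> = (\<lambda>x y z. 0)"

definition B2 :: "('k::field \<Rightarrow> 'l::ab_group_add \<Rightarrow> 'l) \<Rightarrow> ('l \<Rightarrow> 'l \<Rightarrow> 'l) \<Rightarrow> ('l \<Rightarrow> 'l \<Rightarrow> 'k) \<Rightarrow> bool"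
  where "B2 sL br \<omega> \<longleftrightarrow> (\<exists>lam. lin_map sL (*) lam \<and> \<omega> = (\<lambda>x y. - lam (br x y)))"

definition Z3 :: "('k::field \<Rightarrow> 'l::ab_group_add \<Rightarrow> 'l) \<Rightarrow> ('l \<Rightarrow> 'l \<Rightarrow> 'l) \<Rightarrow> ('l \<Rightarrow> 'l \<Rightarrow> 'l \<Rightarrow> 'k) \<Rightarrow> bool"
  where "Z3 sL br \<theta> \<longleftrightarrow> alt3 sL \<theta> \<and> d3 br \<theta> = (\<lambda>x y z w. 0)"

definition B3 :: "('k::field \<Rightarrow> 'l::ab_group_add \<Rightarrow> 'l) \<Rightarrow> ('l \<Rightarrow> 'l \<Rightarrow> 'l) \<Rightarrow> ('l \<Rightarrow> 'l \<Rightarrow> 'l \<Rightarrow> 'k) \<Rightarrow> bool"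
  where "B3 sL br \<theta> \<longleftrightarrow> (\<exists>\<eta>. alt2 sL \<eta> \<and> \<theta> = d2 br \<eta>)"

section \<open>Koszul map\<close>

text \<open>Invariant symmetric bilinear forms on k, i.e. elements of Sym^2(k)^k.\<close>
definition inv_sym :: "('k::field \<Rightarrow> 'l::ab_group_add \<Rightarrow> 'l) \<Rightarrow> ('l \<Rightarrow> 'l \<Rightarrow> 'l) \<Rightarrow> ('l \<Rightarrow> 'l \<Rightarrow> 'k) \<Rightarrow> bool"
  where "inv_sym sL br \<kappa> \<longleftrightarrow> bilin sL sL \<kappa> \<and> (\<forall>x y. \<kappa> x y = \<kappa> y x) \<and>
     (\<forall>x y z. \<kappa> (br x y) z = \<kappa> x (br y z))"

definition Gamma :: "('l \<Rightarrow> 'l \<Rightarrow> 'l) \<Rightarrow> ('l \<Rightarrow> 'l \<Rightarrow> 'k) \<Rightarrow> ('l \<Rightarrow> 'l \<Rightarrow> 'l \<Rightarrow> 'k)"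
  where "Gamma br \<kappa> = (\<lambda>x y z. \<kappa> (br x y) z)"

text \<open>Z^3(k)_Gamma = im Gamma and B^3(k)_Gamma = B^3(k) \<inter> im Gamma.\<close>
definition Z3_Gamma :: "('k::field \<Rightarrow> 'l::ab_group_add \<Rightarrow> 'l) \<Rightarrow> ('l \<Rightarrow> 'l \<Rightarrow> 'l) \<Rightarrow> ('l \<Rightarrow> 'l \<Rightarrow> 'l \<Rightarrow> 'k) \<Rightarrow> bool"
  where "Z3_Gamma sL br \<theta> \<longleftrightarrow> (\<exists>\<kappa>. inv_sym sL br \<kappa> \<and> \<theta> = Gamma br \<kappa>)"

definition B3_Gamma :: "('k::field \<Rightarrow> 'l::ab_group_add \<Rightarrow> 'l) \<Rightarrow> ('l \<Rightarrow> 'l \<Rightarrow> 'l) \<Rightarrow> ('l \<Rightarrow> 'l \<Rightarrow> 'l \<Rightarrow> 'k) \<Rightarrow> bool"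
  where "B3_Gamma sL br \<theta> \<longleftrightarrow> B3 sL br \<theta> \<and> Z3_Gamma sL br \<theta>"

section \<open>2-cochains on g = A \<otimes> k, via their values on pure tensors\<close>

text \<open>A bilinear form f on g = A \<otimes> k is determined by the 4-linear map
  F a x b y = f(ax, by).  Since 2 is invertible, f is alternating iff
  F a x b y = - F b y a x.\<close>
definition g_alt2 ::
  "('k::field \<Rightarrow> 'a::comm_ring_1 \<Rightarrow> 'a) \<Rightarrow> ('k \<Rightarrow> 'l::ab_group_add \<Rightarrow> 'l) \<Rightarrow>
   ('a \<Rightarrow> 'l \<Rightarrow> 'a \<Rightarrow> 'l \<Rightarrow> 'k) \<Rightarrow> bool"
  where "g_alt2 sA sL F \<longleftrightarrow> quadlin sA sL F \<and> (\<forall>a x b y. F a x b y = - F b y a x)"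

text \<open>2-cocycle condition f([u,v],w) + f([v,w],u) + f([w,u],v) = 0 on pure tensors.\<close>
definition g_Z2 ::
  "('k::field \<Rightarrow> 'a::comm_ring_1 \<Rightarrow> 'a) \<Rightarrow> ('k \<Rightarrow> 'l::ab_group_add \<Rightarrow> 'l) \<Rightarrow> ('l \<Rightarrow> 'l \<Rightarrow> 'l) \<Rightarrow>
   ('a \<Rightarrow> 'l \<Rightarrow> 'a \<Rightarrow> 'l \<Rightarrow> 'k) \<Rightarrow> bool"
  where "g_Z2 sA sL br F \<longleftrightarrow> g_alt2 sA sL F \<and>
    (\<forall>a x b y c z. F (a * b) (br x y) c z + F (b * c) (br y z) a x + F (c * a) (br z x) b y = 0)"

text \<open>2-coboundaries (u,v) \<mapsto> - l([u,v]) with l \<in> g^*; a linear l on A \<otimes> k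
  is the same as a bilinear map on A \<times> k.\<close>
definition g_B2 ::
  "('k::field \<Rightarrow> 'a::comm_ring_1 \<Rightarrow> 'a) \<Rightarrow> ('k \<Rightarrow> 'l::ab_group_add \<Rightarrow> 'l) \<Rightarrow> ('l \<Rightarrow> 'l \<Rightarrow> 'l) \<Rightarrow>
   ('a \<Rightarrow> 'l \<Rightarrow> 'a \<Rightarrow> 'l \<Rightarrow> 'k) \<Rightarrow> bool"
  where "g_B2 sA sL br F \<longleftrightarrow>
    (\<exists>l. bilin sA sL l \<and> (\<forall>a x b y. F a x b y = - l (a * b) (br x y)))"

text \<open>Alt^2(g/g')_{1,3}, pulled back along q \<times> q: alternating forms on g vanishing
  whenever an argument lies in g' = A \<otimes> k', and satisfying the (1,3)-condition.\<close>
definition alt13 ::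
  "('k::field \<Rightarrow> 'a::comm_ring_1 \<Rightarrow> 'a) \<Rightarrow> ('k \<Rightarrow> 'l::ab_group_add \<Rightarrow> 'l) \<Rightarrow> ('l \<Rightarrow> 'l \<Rightarrow> 'l) \<Rightarrow>
   ('a \<Rightarrow> 'l \<Rightarrow> 'a \<Rightarrow> 'l \<Rightarrow> 'k) \<Rightarrow> bool"
  where "alt13 sA sL br W \<longleftrightarrow> g_alt2 sA sL W \<and>
    (\<forall>a x b y. x \<in> derived sL br \<longrightarrow> W a x b y = 0) \<and>
    (\<forall>a x y. W a x 1 y + W 1 x a y = 0)"

text \<open>Linear lifts A \<rightarrow> Z^2(k) of elements of Lin(A, H^2(k)).\<close>
definition H2_lift ::
  "('k::field \<Rightarrow> 'a::comm_ring_1 \<Rightarrow> 'a) \<Rightarrow> ('k \<Rightarrow> 'l::ab_group_add \<Rightarrow> 'l) \<Rightarrow> ('l \<Rightarrow> 'l \<Rightarrow> 'l) \<Rightarrow>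
   ('a \<Rightarrow> 'l \<Rightarrow> 'l \<Rightarrow> 'k) \<Rightarrow> bool"
  where "H2_lift sA sL br \<phi> \<longleftrightarrow> lin_map sA fsc2 \<phi> \<and> (\<forall>a. Z2 sL br (\<phi> a))"

text \<open>Representative of Phi(omega, phi) = [omega o (q \<times> q)] + [f_phi].\<close>
definition Phi_rep ::
  "('a::comm_ring_1 \<Rightarrow> 'l \<Rightarrow> 'a \<Rightarrow> 'l \<Rightarrow> 'k::field) \<Rightarrow> ('a \<Rightarrow> 'l \<Rightarrow> 'l \<Rightarrow> 'k) \<Rightarrow>
   ('a \<Rightarrow> 'l \<Rightarrow> 'a \<Rightarrow> 'l \<Rightarrow> 'k)"
  where "Phi_rep W \<phi> = (\<lambda>a x b y. W a x b y + \<phi> (a * b) x y)"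

text \<open>tilde f_1(a,b)(x,y) = f_1(a \<and> b \<otimes> x \<or> y).  Inverting the decomposition
  (p1,p2,p3): p2 and p3 are antisymmetric in (x,y) while p1 is symmetric, so
  f_1(a\<and>b \<otimes> x\<or>y) = (f(ax,by) + f(ay,bx))/2.\<close>
definition f1tilde ::
  "('a \<Rightarrow> 'l \<Rightarrow> 'a \<Rightarrow> 'l \<Rightarrow> 'k::field) \<Rightarrow> 'a \<Rightarrow> 'a \<Rightarrow> 'l \<Rightarrow> 'l \<Rightarrow> 'k"
  where "f1tilde F a b x y = (F a x b y + F a y b x) / 2"

text \<open>As a K-vector space, Omega^1(A) = (A \<otimes> A) / span{a \<otimes> bc - ab \<otimes> c - ac \<otimes> b},
  with a d_A(b) the class of a \<otimes> b.  Hence a K-linear map D : Omega^1(A) \<rightarrow> V is the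
  same as a bilinear map beta(a,b) = D(a d_A b) satisfying the Leibniz relation.
  Here V = 3-linear forms on k.\<close>
definition omega1_lin ::
  "('k::field \<Rightarrow> 'a::comm_ring_1 \<Rightarrow> 'a) \<Rightarrow> ('a \<Rightarrow> 'a \<Rightarrow> ('l \<Rightarrow> 'l \<Rightarrow> 'l \<Rightarrow> 'k)) \<Rightarrow> bool"
  where "omega1_lin sA \<beta> \<longleftrightarrow>
     (\<forall>b. lin_map sA fsc3 (\<lambda>a. \<beta> a b)) \<and> (\<forall>a. lin_map sA fsc3 (\<beta> a)) \<and>
     (\<forall>a b c. \<beta> a (b * c) = \<beta> (a * b) c + \<beta> (a * c) b)"

text \<open>D in Lin((Omega^1(A), d_A(A)), (Z^3(k)_Gamma, B^3(k)_Gamma)).\<close>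
definition omega1_target ::
  "('k::field \<Rightarrow> 'a::comm_ring_1 \<Rightarrow> 'a) \<Rightarrow> ('k \<Rightarrow> 'l::ab_group_add \<Rightarrow> 'l) \<Rightarrow> ('l \<Rightarrow> 'l \<Rightarrow> 'l) \<Rightarrow>
   ('a \<Rightarrow> 'a \<Rightarrow> ('l \<Rightarrow> 'l \<Rightarrow> 'l \<Rightarrow> 'k)) \<Rightarrow> bool"
  where "omega1_target sA sL br \<beta> \<longleftrightarrow> omega1_lin sA \<beta> \<and>
     (\<forall>a b. Z3_Gamma sL br (\<beta> a b)) \<and> (\<forall>b. B3_Gamma sL br (\<beta> 1 b))"

text \<open>Psi([F]) = D, where D(a d_A b) = beta a b:
  D(a d_A b - b d_A a) = Gamma(tilde f_1(a,b)) for all a, b.\<close>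
definition Psi_eq ::
  "('l \<Rightarrow> 'l \<Rightarrow> 'l) \<Rightarrow> ('a::comm_ring_1 \<Rightarrow> 'l \<Rightarrow> 'a \<Rightarrow> 'l \<Rightarrow> 'k::field) \<Rightarrow>
   ('a \<Rightarrow> 'a \<Rightarrow> ('l \<Rightarrow> 'l \<Rightarrow> 'l \<Rightarrow> 'k)) \<Rightarrow> bool"
  where "Psi_eq br F \<beta> \<longleftrightarrow> (\<forall>a b. \<beta> a b - \<beta> b a = Gamma br (f1tilde F a b))"

end

theory Submission
  imports Defs
begin

(*
  A 2-cochain f on g = A \<otimes> k is handled through its values F a x b y = f(ax, by).

  Phi is injective: if W(ax,by) + phi(ab)(x,y) = -l(ab,[x,y]), the right-hand side depends on
  a, b only through ab, so W(ax,1y) = W(1x,ay); the (1,3)-condition and 2 \<noteq> 0 make this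
  vanish, hence W(ax,by) = W(abx,1y) = 0, and phi(a) = -l(a,[_,_]) is a coboundary.

  The kernel of Psi: Psi[f] = 0 says F a x b [y,z] = - F a [y,z] b x.  Together with the
  cocycle identity for (a,b,1) and for (ab,1,1) this forces F a [u,v] b w = F (ab) [u,v] 1 w.
  So with phi(c) the antisymmetrisation of (x,y) \<mapsto> F c x 1 y, a Z^2(k)-valued linear map,
  f - f_phi vanishes on g' and satisfies the (1,3)-condition, i.e. [f] lies in the image of Phi.

  Psi is onto: given D, pick linear sections of Gamma on invariant symmetric forms and of d on
  Alt^2(k), let kappa(a,b) lift D(a db - b da) and eta(c) lift D(dc), and put
  F a x b y = kappa(a,b)(x,y) - eta(ab)(x,y).  The Leibniz rule for D is exactly the cyclic
  identity that makes F a cocycle, and the symmetric part of F on brackets is kappa.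
*)

lemma double_eq_0_imp:
  assumes "(2::'k::field) \<noteq> 0" "w + w = (0::'k)"
  shows "w = 0"
  using assms by (metis mult_2 mult_eq_0_iff)

lemma half_add_self:
  assumes "(2::'k::field) \<noteq> 0"
  shows "(u + u) / 2 = (u::'k)"
  using assms by (metis mult_2 nonzero_mult_div_cancel_left)

lemma half_add_half:
  assumes "(2::'k::field) \<noteq> 0"
  shows "u / 2 + u / 2 = (u::'k)"
  using half_add_self[OF assms] by (metis add_divide_distrib)

lemma lin_map_simps:
  assumes "lin_map s t f"
  shows "f (x + y) = f x + f y" "f (s c x) = t c (f x)" "f (- x) = - f x" "f 0 = 0"
proof -
  interpret additive f
    using assms by (simp add: additive_def lin_map_def)
  show "f (x + y) = f x + f y" "f (- x) = - f x" "f 0 = 0"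
    by (simp_all add: add minus zero)
  show "f (s c x) = t c (f x)"
    using assms by (simp add: lin_map_def)
qed

lemma lin_map_compose: "lin_map s t f \<Longrightarrow> lin_map t u g \<Longrightarrow> lin_map s u (g \<circ> f)"
  by (simp add: lin_map_def)

lemma lin_map_diff:
  assumes t: "module t" and f: "lin_map s t f" and g: "lin_map s t g"
  shows "lin_map s t (\<lambda>x. f x - g x)"
  unfolding lin_map_def
proof (intro conjI allI)
  show "f (x + y) - g (x + y) = (f x - g x) + (f y - g y)" for x y
    by (simp add: lin_map_simps(1)[OF f] lin_map_simps(1)[OF g])
  show "f (s c x) - g (s c x) = t c (f x - g x)" for c x
    by (simp add: lin_map_simps(2)[OF f] lin_map_simps(2)[OF g] module.scale_right_diff_distrib[OF t])
qed

lemma lin_map_if_module_hom: "module_hom s t f \<Longrightarrow> lin_map s t f"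
  by (simp add: lin_map_def module_hom.add module_hom.scale)

lemma lin_map_eq_0_on_span:
  assumes s: "module s" and f: "lin_map s (*) f"
    and f_B: "\<And>v. v \<in> B \<Longrightarrow> f v = 0" and x: "x \<in> module.span s B"
  shows "f x = 0"
proof -
  interpret module s by (rule s)
  show ?thesis
    using x
  proof (induction rule: span_induct_alt)
    case base
    show ?case by (rule lin_map_simps(4)[OF f])
  next
    case (step c v w)
    thus ?case by (simp add: lin_map_simps(1,2)[OF f] f_B)
  qed
qed

lemma linear_section_on_image:
  assumes "vector_space s1" "vector_space s2" "module_hom s1 s2 f" "module.subspace s1 S"
  obtains g where "\<And>v. g v \<in> S" "lin_map s2 s1 g" "\<And>v. v \<in> f ` S \<Longrightarrow> f (g v) = v"
proof -
  interpret vector_space_pair s1 s2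
    using assms(1,2) by (simp add: vector_space_pair_def)
  have "Vector_Spaces.linear s1 s2 f"
    using assms(3) by (simp add: module_hom_iff_linear)
  from linear_exists_right_inverse_on[OF this assms(4)] obtain g
    where g: "g ` UNIV \<subseteq> S" "Vector_Spaces.linear s2 s1 g" "\<forall>v\<in>f ` S. f (g v) = v"
    by blast
  show ?thesis
  proof (rule that)
    show "lin_map s2 s1 g"
      using g(2) by (simp add: lin_map_if_module_hom module_hom_iff_linear)
  qed (use g in auto)
qed

lemma bilin_simps:
  assumes "bilin s1 s2 B"
  shows "B (x + x') y = B x y + B x' y" "B (s1 c x) y = c * B x y"
    "B (- x) y = - B x y" "B 0 y = 0"
    "B x (y + y') = B x y + B x y'" "B x (s2 c y) = c * B x y"
    "B x (- y) = - B x y" "B x 0 = 0"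
proof -
  from assms have l1: "lin_map s1 (*) (\<lambda>x. B x y)" and l2: "lin_map s2 (*) (B x)" for x y
    unfolding bilin_def by blast+
  show "B (x + x') y = B x y + B x' y" "B (s1 c x) y = c * B x y"
    "B (- x) y = - B x y" "B 0 y = 0"
    using lin_map_simps[OF l1] by simp_all
  show "B x (y + y') = B x y + B x y'" "B x (s2 c y) = c * B x y"
    "B x (- y) = - B x y" "B x 0 = 0"
    using lin_map_simps[OF l2] by simp_all
qed

lemma quadlin_simps:
  assumes "quadlin sA sL F"
  shows "F (a + a') x b y = F a x b y + F a' x b y" "F (sA c a) x b y = c * F a x b y"
    "F (- a) x b y = - F a x b y" "F 0 x b y = 0"
    "F a (x + x') b y = F a x b y + F a x' b y" "F a (sL c x) b y = c * F a x b y"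
    "F a (- x) b y = - F a x b y" "F a 0 b y = 0"
    "F a x (b + b') y = F a x b y + F a x b' y" "F a x (sA c b) y = c * F a x b y"
    "F a x (- b) y = - F a x b y" "F a x 0 y = 0"
    "F a x b (y + y') = F a x b y + F a x b y'" "F a x b (sL c y) = c * F a x b y"
    "F a x b (- y) = - F a x b y" "F a x b 0 = 0"
proof -
  from assms have
    l1: "lin_map sA (*) (\<lambda>a. F a x b y)" and l2: "lin_map sL (*) (\<lambda>x. F a x b y)" and
    l3: "lin_map sA (*) (\<lambda>b. F a x b y)" and l4: "lin_map sL (*) (\<lambda>y. F a x b y)" for a x b y
    unfolding quadlin_def by blast+
  show "F (a + a') x b y = F a x b y + F a' x b y" "F (sA c a) x b y = c * F a x b y"
    "F (- a) x b y = - F a x b y" "F 0 x b y = 0"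
    using lin_map_simps[OF l1] by simp_all
  show "F a (x + x') b y = F a x b y + F a x' b y" "F a (sL c x) b y = c * F a x b y"
    "F a (- x) b y = - F a x b y" "F a 0 b y = 0"
    using lin_map_simps[OF l2] by simp_all
  show "F a x (b + b') y = F a x b y + F a x b' y" "F a x (sA c b) y = c * F a x b y"
    "F a x (- b) y = - F a x b y" "F a x 0 y = 0"
    using lin_map_simps[OF l3] by simp_all
  show "F a x b (y + y') = F a x b y + F a x b y'" "F a x b (sL c y) = c * F a x b y"
    "F a x b (- y) = - F a x b y" "F a x b 0 = 0"
    using lin_map_simps[OF l4] by simp_all
qed

lemma antisym_if_biadditive_diag_0:
  fixes B :: "'u::ab_group_add \<Rightarrow> 'u \<Rightarrow> 'v::ab_group_add"
  assumes "\<And>x x' y. B (x + x') y = B x y + B x' y" "\<And>x y y'. B x (y + y') = B x y + B x y'"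
    and "\<And>x. B x x = 0"
  shows "B y x = - B x y"
proof -
  have "B (x + y) (x + y) = B x x + B x y + (B y x + B y y)"
    by (simp add: assms(1,2))
  thus ?thesis
    by (simp add: assms(3) eq_neg_iff_add_eq_0 add.commute)
qed

lemma alt2_antisym: "alt2 s \<eta> \<Longrightarrow> \<eta> y x = - \<eta> x y"
  unfolding alt2_def by (rule antisym_if_biadditive_diag_0) (auto simp: bilin_simps)

lemma comm_algebra_scale_mult:
  assumes "comm_algebra sA"
  shows "sA c a * b = sA c (a * b)" "a * sA c b = sA c (a * b)"
proof -
  have scale_mult: "sA c (a * b) = sA c a * b" for a b
    using assms unfolding comm_algebra_def by blast
  show "sA c a * b = sA c (a * b)"
    by (simp add: scale_mult)
  show "a * sA c b = sA c (a * b)"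
    by (metis scale_mult mult.commute)
qed

lemma lie_algebra_module: "lie_algebra sL br \<Longrightarrow> module sL"
  by (simp add: lie_algebra_def module_iff_vector_space)

lemma lie_algebra_antisym:
  assumes "lie_algebra sL br"
  shows "br y x = - br x y"
proof (rule antisym_if_biadditive_diag_0[where B = br])
  from assms have l1: "lin_map sL sL (\<lambda>x. br x y)" and l2: "lin_map sL sL (br x)"
    and diag: "br x x = 0" for x y
    unfolding lie_algebra_def by blast+
  show "br (x + x') y = br x y + br x' y" for x x' y
    using lin_map_simps(1)[OF l1] by simp
  show "br x (y + y') = br x y + br x y'" for x y y'
    using lin_map_simps(1)[OF l2] by simp
  show "br x x = 0" for x
    by (rule diag)
qed

lemma bracket_in_derived:
  assumes "lie_algebra sL br"
  shows "br x y \<in> derived sL br"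
  unfolding derived_def using lie_algebra_module[OF assms] by (auto intro: module.span_base)

section \<open>Injectivity of Phi and the kernel of Psi\<close>

lemma Psi_eq_iff:
  "Psi_eq br F \<beta> \<longleftrightarrow>
    (\<forall>a b x y z. \<beta> a b x y z - \<beta> b a x y z = (F a (br x y) b z + F a z b (br x y)) / 2)"
  unfolding Psi_eq_def Gamma_def f1tilde_def fun_eq_iff by simp

lemma Psi_eq_0_iff:
  fixes F :: "'a::comm_ring_1 \<Rightarrow> 'l \<Rightarrow> 'a \<Rightarrow> 'l \<Rightarrow> 'k::field"
  assumes "(2::'k::field) \<noteq> 0"
  shows "Psi_eq br F (\<lambda>a b x y z. 0) \<longleftrightarrow>
    (\<forall>a x b y z. F a x b (br y z) = - F a (br y z) b x)"
proof -
  have half_sum: "0 = (u + v) / 2 \<longleftrightarrow> v = - u" for u v :: 'k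
    using assms by (simp add: eq_neg_iff_add_eq_0 add.commute eq_commute[of 0])
  show ?thesis
    unfolding Psi_eq_iff diff_self half_sum by blast
qed

lemma Phi_rep_coboundary_imp_trivial:
  fixes W :: "'a::comm_ring_1 \<Rightarrow> 'l::ab_group_add \<Rightarrow> 'a \<Rightarrow> 'l \<Rightarrow> 'k::field"
  assumes two: "(2::'k) \<noteq> 0"
    and W_13: "\<And>a x y. W a x 1 y + W 1 x a y = 0"
    and cob: "g_B2 sA sL br (Phi_rep W \<phi>)"
  shows "W = (\<lambda>a x b y. 0) \<and> (\<forall>a. B2 sL br (\<phi> a))"
proof -
  obtain l where l: "bilin sA sL l"
    and eq: "\<And>a x b y. W a x b y + \<phi> (a * b) x y = - l (a * b) (br x y)"
    using cob unfolding g_B2_def Phi_rep_def by blast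
  have W_unit: "W a x 1 y = 0" for a x y
  proof -
    have "W a x 1 y = W 1 x a y"
      using eq[of a x 1 y] eq[of 1 x a y] by (metis add_right_cancel mult_1_left mult_1_right)
    thus ?thesis
      using W_13[of a x y] double_eq_0_imp[OF two] by metis
  qed
  have "W a x b y = 0" for a x b y
    using eq[of a x b y] eq[of "a * b" x 1 y] W_unit[of "a * b" x y]
    by (metis add_right_cancel mult_1_right)
  moreover have "B2 sL br (\<phi> a)" for a
    unfolding B2_def
  proof (intro exI conjI)
    show "lin_map sL (*) (l a)"
      using l unfolding bilin_def by blast
    show "\<phi> a = (\<lambda>x y. - l a (br x y))"
      using eq[of a _ 1 _] W_unit[of a] by (auto simp: fun_eq_iff)
  qed
  ultimately show ?thesis
    by (auto simp: fun_eq_iff)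
qed

lemma Psi_eq_0_if_cohomologous_to_Phi_rep:
  fixes F :: "'a::comm_ring_1 \<Rightarrow> 'l::ab_group_add \<Rightarrow> 'a \<Rightarrow> 'l \<Rightarrow> 'k::field"
  assumes two: "(2::'k) \<noteq> 0"
    and k: "lie_algebra sL br"
    and W: "alt13 sA sL br W" and \<phi>: "H2_lift sA sL br \<phi>"
    and cob: "g_B2 sA sL br (\<lambda>a x b y. F a x b y - Phi_rep W \<phi> a x b y)"
  shows "Psi_eq br F (\<lambda>a b x y z. 0)"
  unfolding Psi_eq_0_iff[OF two]
proof (intro allI)
  fix a x b y z
  obtain l where l: "bilin sA sL l"
    and eq: "\<And>c u d v. F c u d v = - l (c * d) (br u v) + (W c u d v + \<phi> (c * d) u v)"
    using cob unfolding g_B2_def Phi_rep_def diff_eq_eq by blast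
  have W_derived: "W c (br y z) d w = 0" for c d w
    using W bracket_in_derived[OF k] unfolding alt13_def by blast
  have W_anti: "W a x b (br y z) = - W b (br y z) a x"
    using W unfolding alt13_def g_alt2_def by blast
  have \<phi>_anti: "\<phi> (a * b) x (br y z) = - \<phi> (a * b) (br y z) x"
    using \<phi> unfolding H2_lift_def Z2_def by (blast intro: alt2_antisym)
  have l_anti: "l (a * b) (br x (br y z)) = - l (a * b) (br (br y z) x)"
    using lie_algebra_antisym[OF k, of x "br y z"] bilin_simps(7)[OF l] by simp
  have "F a x b (br y z) = l (a * b) (br (br y z) x) - \<phi> (a * b) (br y z) x"
    using eq[of a x b "br y z"] W_anti W_derived[of b a x] \<phi>_anti l_anti by simp
  also have "\<dots> = - F a (br y z) b x"
    using eq[of a "br y z" b x] W_derived[of a b x] by simp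
  finally show "F a x b (br y z) = - F a (br y z) b x" .
qed

lemma cyclic_sum_at_unit:
  assumes F: "g_Z2 sA sL br F"
    and S: "\<And>a x b y z. F a x b (br y z) = - F a (br y z) b x"
  shows "F c (br x y) 1 z + F c (br y z) 1 x + F c (br z x) 1 y = 0"
proof -
  have "F 1 (br y z) c x = - F c x 1 (br y z)"
    using F unfolding g_Z2_def g_alt2_def by blast
  hence "F 1 (br y z) c x = F c (br y z) 1 x"
    using S[of c x 1 y z] by simp
  moreover have "F (c * 1) (br x y) 1 z + F (1 * 1) (br y z) c x + F (1 * c) (br z x) 1 y = 0"
    using F unfolding g_Z2_def by blast
  ultimately show ?thesis
    by simp
qed

lemma bracket_entry_eq_product_entry:
  assumes two: "(2::'k::field) \<noteq> 0"
    and F: "g_Z2 sA sL br (F :: 'a::comm_ring_1 \<Rightarrow> 'l::ab_group_add \<Rightarrow> 'a \<Rightarrow> 'l \<Rightarrow> 'k)"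
    and S: "\<And>a x b y z. F a x b (br y z) = - F a (br y z) b x"
  shows "F a (br u v) b w = F (a * b) (br u v) 1 w"
proof -
  define G where "G x y z = F a (br x y) b z" for x y z
  define P where "P x y z = F (a * b) (br x y) 1 z" for x y z
  have cocycle: "P x y z + G y z x + G z x y = 0" for x y z
  proof -
    have "F b (br y z) a x = - F a x b (br y z)"
      using F unfolding g_Z2_def g_alt2_def by blast
    moreover have "F (a * b) (br x y) 1 z + F (b * 1) (br y z) a x + F (1 * a) (br z x) b y = 0"
      using F unfolding g_Z2_def by blast
    ultimately show ?thesis
      using S[of a x b y z] by (simp add: G_def P_def)
  qed
  have P_cyclic: "P x y z + P y z x + P z x y = 0" for x y z
    unfolding P_def by (rule cyclic_sum_at_unit[OF F S])
  \<comment> \<open>summing \<open>cocycle\<close> over the cyclic permutations leaves twice the cyclic sum of \<open>G\<close>\<close>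
  have "(G u v w + G v w u + G w u v) + (G u v w + G v w u + G w u v) = 0"
    using cocycle[of u v w] cocycle[of v w u] cocycle[of w u v] P_cyclic[of u v w] by algebra
  hence "G u v w + G v w u + G w u v = 0"
    by (rule double_eq_0_imp[OF two])
  hence "P u v w = G u v w"
    using cocycle[of u v w] by algebra
  thus ?thesis
    by (simp add: G_def P_def)
qed

(* For [f] in the kernel of Psi, the pair (omega, phi) with Phi(omega, phi) = [f]. *)
definition lift_part ::
  "('a::comm_ring_1 \<Rightarrow> 'l \<Rightarrow> 'a \<Rightarrow> 'l \<Rightarrow> 'k::field) \<Rightarrow> 'a \<Rightarrow> 'l \<Rightarrow> 'l \<Rightarrow> 'k"
  where "lift_part F c x y = (F c x 1 y - F c y 1 x) / 2"

definition alt13_part ::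
  "('a::comm_ring_1 \<Rightarrow> 'l \<Rightarrow> 'a \<Rightarrow> 'l \<Rightarrow> 'k::field) \<Rightarrow> 'a \<Rightarrow> 'l \<Rightarrow> 'a \<Rightarrow> 'l \<Rightarrow> 'k"
  where "alt13_part F a x b y = F a x b y - lift_part F (a * b) x y"

lemma Phi_rep_alt13_part_lift_part: "Phi_rep (alt13_part F) (lift_part F) = F"
  by (simp add: Phi_rep_def alt13_part_def fun_eq_iff)

lemma lift_part_bracket:
  fixes F :: "'a::comm_ring_1 \<Rightarrow> 'l \<Rightarrow> 'a \<Rightarrow> 'l \<Rightarrow> 'k::field"
  assumes two: "(2::'k) \<noteq> 0"
    and S: "\<And>a x b y z. F a x b (br y z) = - F a (br y z) b x"
  shows "lift_part F c (br u v) w = F c (br u v) 1 w"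
proof -
  have "F c (br u v) 1 w - F c w 1 (br u v) = F c (br u v) 1 w + F c (br u v) 1 w"
    by (simp only: S[of c w 1 u v] diff_minus_eq_add)
  thus ?thesis
    unfolding lift_part_def using half_add_self[OF two] by metis
qed

lemma H2_lift_lift_part:
  assumes two: "(2::'k::field) \<noteq> 0"
    and k: "lie_algebra sL br"
    and F: "g_Z2 sA sL br (F :: 'a::comm_ring_1 \<Rightarrow> 'l::ab_group_add \<Rightarrow> 'a \<Rightarrow> 'l \<Rightarrow> 'k)"
    and S: "\<And>a x b y z. F a x b (br y z) = - F a (br y z) b x"
  shows "H2_lift sA sL br (lift_part F)"
  unfolding H2_lift_def
proof (intro conjI allI)
  have Fq: "quadlin sA sL F"
    using F unfolding g_Z2_def g_alt2_def by blast
  note F_simps = quadlin_simps[OF Fq]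
  show "lin_map sA fsc2 (lift_part F)"
    unfolding lin_map_def fsc2_def lift_part_def
    by (simp add: F_simps fun_eq_iff algebra_simps diff_divide_distrib add_divide_distrib)
  fix a
  have "bilin sL sL (lift_part F a)"
    unfolding bilin_def lin_map_def lift_part_def
    by (simp add: F_simps algebra_simps diff_divide_distrib add_divide_distrib)
  moreover have "d2 br (lift_part F a) x y z = 0" for x y z
  proof -
    have "F a (br x z) 1 y = - F a (br z x) 1 y"
      using lie_algebra_antisym[OF k, of x z] by (simp add: F_simps)
    moreover have "lift_part F a (br u v) w = F a (br u v) 1 w" for u v w
      using two S by (rule lift_part_bracket)
    ultimately have "d2 br (lift_part F a) x y z
        = - (F a (br x y) 1 z + F a (br y z) 1 x + F a (br z x) 1 y)"
      unfolding d2_def by (simp add: algebra_simps)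
    thus ?thesis
      using cyclic_sum_at_unit[OF F S, of a x y z] by simp
  qed
  ultimately show "Z2 sL br (lift_part F a)"
    unfolding Z2_def alt2_def by (auto simp: fun_eq_iff lift_part_def)
qed

lemma alt13_alt13_part:
  assumes two: "(2::'k::field) \<noteq> 0"
    and A: "comm_algebra sA"
    and k: "lie_algebra sL br"
    and F: "g_Z2 sA sL br (F :: 'a::comm_ring_1 \<Rightarrow> 'l::ab_group_add \<Rightarrow> 'a \<Rightarrow> 'l \<Rightarrow> 'k)"
    and S: "\<And>a x b y z. F a x b (br y z) = - F a (br y z) b x"
  shows "alt13 sA sL br (alt13_part F)"
proof -
  have Fq: "quadlin sA sL F" and F_anti: "\<And>a x b y. F a x b y = - F b y a x"
    using F unfolding g_Z2_def g_alt2_def by blast+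
  have quadlin: "quadlin sA sL (alt13_part F)"
    unfolding quadlin_def lin_map_def alt13_part_def lift_part_def
    by (simp add: quadlin_simps[OF Fq] comm_algebra_scale_mult[OF A] algebra_simps
        diff_divide_distrib add_divide_distrib)
  have "alt13_part F a x b y = - alt13_part F b y a x" for a x b y
    unfolding alt13_part_def lift_part_def using F_anti[of a x b y]
    by (simp add: mult.commute[of b a] diff_divide_distrib)
  moreover have "alt13_part F a x b y = 0" if "x \<in> derived sL br" for a x b y
  proof (rule lin_map_eq_0_on_span[OF lie_algebra_module[OF k], where f = "\<lambda>x. alt13_part F a x b y"])
    show "lin_map sL (*) (\<lambda>x. alt13_part F a x b y)"
      using quadlin unfolding quadlin_def by blast
    have "lift_part F c (br u v) w = F c (br u v) 1 w" for c u v w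
      using two S by (rule lift_part_bracket)
    thus "alt13_part F a v b y = 0" if "v \<in> {br x y |x y. True}" for v
      using that bracket_entry_eq_product_entry[OF two F S] by (auto simp: alt13_part_def)
    show "x \<in> module.span sL {br x y |x y. True}"
      using \<open>x \<in> derived sL br\<close> unfolding derived_def .
  qed
  moreover have "alt13_part F a x 1 y + alt13_part F 1 x a y = 0" for a x y
  proof -
    have "lift_part F a x y + lift_part F a x y = F a x 1 y - F a y 1 x"
      unfolding lift_part_def by (rule half_add_half[OF two])
    thus ?thesis
      unfolding alt13_part_def using F_anti[of 1 x a y] by (simp add: algebra_simps)
  qed
  ultimately show ?thesis
    using quadlin unfolding alt13_def g_alt2_def by blast
qed

lemma g_B2_zero: "g_B2 sA sL br (\<lambda>a x b y. 0)"
  unfolding g_B2_def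
proof (intro exI conjI allI)
  show "bilin sA sL (\<lambda>_ _. 0)"
    unfolding bilin_def lin_map_def by simp
qed simp

lemma ker_Psi_in_im_Phi:
  assumes two: "(2::'k::field) \<noteq> 0"
    and A: "comm_algebra sA"
    and k: "lie_algebra sL br"
    and F: "g_Z2 sA sL br (F :: 'a::comm_ring_1 \<Rightarrow> 'l::ab_group_add \<Rightarrow> 'a \<Rightarrow> 'l \<Rightarrow> 'k)"
    and ker: "Psi_eq br F (\<lambda>a b x y z. 0)"
  shows "\<exists>W \<phi>. alt13 sA sL br W \<and> H2_lift sA sL br \<phi> \<and>
           g_B2 sA sL br (\<lambda>a x b y. F a x b y - Phi_rep W \<phi> a x b y)"
proof (intro exI conjI)
  have S: "\<And>a x b y z. F a x b (br y z) = - F a (br y z) b x"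
    using ker unfolding Psi_eq_0_iff[OF two] by blast
  show "alt13 sA sL br (alt13_part F)"
    by (rule alt13_alt13_part[OF two A k F S])
  show "H2_lift sA sL br (lift_part F)"
    by (rule H2_lift_lift_part[OF two k F S])
  show "g_B2 sA sL br (\<lambda>a x b y. F a x b y - Phi_rep (alt13_part F) (lift_part F) a x b y)"
    using g_B2_zero by (simp add: Phi_rep_alt13_part_lift_part)
qed

section \<open>Surjectivity of Psi\<close>

lemma vector_space_fsc2: "vector_space (fsc2 :: 'k::field \<Rightarrow> ('x \<Rightarrow> 'y \<Rightarrow> 'k) \<Rightarrow> _)"
  by unfold_locales (auto simp: fsc2_def fun_eq_iff algebra_simps)

lemma vector_space_fsc3: "vector_space (fsc3 :: 'k::field \<Rightarrow> ('x \<Rightarrow> 'y \<Rightarrow> 'z \<Rightarrow> 'k) \<Rightarrow> _)"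
  by unfold_locales (auto simp: fsc3_def fun_eq_iff algebra_simps)

lemma module_fsc2: "module (fsc2 :: 'k::field \<Rightarrow> ('x \<Rightarrow> 'y \<Rightarrow> 'k) \<Rightarrow> _)"
  using vector_space_fsc2 by (simp add: module_iff_vector_space)

lemma module_fsc3: "module (fsc3 :: 'k::field \<Rightarrow> ('x \<Rightarrow> 'y \<Rightarrow> 'z \<Rightarrow> 'k) \<Rightarrow> _)"
  using vector_space_fsc3 by (simp add: module_iff_vector_space)

lemma module_hom_Gamma: "module_hom fsc2 fsc3 (Gamma br :: ('l \<Rightarrow> 'l \<Rightarrow> 'k::field) \<Rightarrow> _)"
  by (rule module_hom.intro[OF module_fsc2 module_fsc3])
    (unfold_locales, auto simp: Gamma_def fsc2_def fsc3_def fun_eq_iff)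

lemma module_hom_d2: "module_hom fsc2 fsc3 (d2 br :: ('l \<Rightarrow> 'l \<Rightarrow> 'k::field) \<Rightarrow> _)"
  by (rule module_hom.intro[OF module_fsc2 module_fsc3])
    (unfold_locales, auto simp: d2_def fsc2_def fsc3_def fun_eq_iff algebra_simps)

lemma subspace_inv_sym: "module.subspace fsc2 {\<kappa>. inv_sym sL br \<kappa>}"
  by (rule module.subspaceI[OF module_fsc2])
    (auto simp: inv_sym_def bilin_def lin_map_def fsc2_def algebra_simps)

lemma subspace_alt2: "module.subspace fsc2 {\<eta>. alt2 sL \<eta>}"
  by (rule module.subspaceI[OF module_fsc2])
    (auto simp: alt2_def bilin_def lin_map_def fsc2_def algebra_simps)

lemma inv_sym_lift:
  fixes \<beta> :: "'a::comm_ring_1 \<Rightarrow> 'a \<Rightarrow> 'l::ab_group_add \<Rightarrow> 'l \<Rightarrow> 'l \<Rightarrow> 'k::field"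
  assumes \<beta>: "omega1_lin sA \<beta>" and Z: "\<And>a b. Z3_Gamma sL br (\<beta> a b)"
  obtains \<kappa> where "\<And>a b. inv_sym sL br (\<kappa> a b)"
    "\<And>b. lin_map sA fsc2 (\<lambda>a. \<kappa> a b)" "\<And>a. lin_map sA fsc2 (\<kappa> a)"
    "\<And>a b. \<kappa> b a = - \<kappa> a b" "\<And>a b. Gamma br (\<kappa> a b) = \<beta> a b - \<beta> b a"
proof -
  obtain g where g_S: "\<And>v. inv_sym sL br (g v)" and g: "lin_map fsc3 fsc2 g"
    and g_section: "\<And>v. v \<in> Gamma br ` {\<kappa>. inv_sym sL br \<kappa>} \<Longrightarrow> Gamma br (g v) = v"
    by (rule linear_section_on_image[OF vector_space_fsc2 vector_space_fsc3 module_hom_Gamma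
        subspace_inv_sym]) auto
  have \<beta>1: "lin_map sA fsc3 (\<lambda>a. \<beta> a b)" and \<beta>2: "lin_map sA fsc3 (\<beta> a)" for a b
    using \<beta> unfolding omega1_lin_def by blast+
  define \<kappa> where "\<kappa> = (\<lambda>a b. g (\<beta> a b - \<beta> b a))"
  show thesis
  proof (rule that)
    show "inv_sym sL br (\<kappa> a b)" for a b
      unfolding \<kappa>_def by (rule g_S)
    show "lin_map sA fsc2 (\<lambda>a. \<kappa> a b)" for b
      using lin_map_compose[OF lin_map_diff[OF module_fsc3 \<beta>1[of b] \<beta>2[of b]] g]
      by (simp add: \<kappa>_def comp_def)
    show "lin_map sA fsc2 (\<kappa> a)" for a
      using lin_map_compose[OF lin_map_diff[OF module_fsc3 \<beta>2[of a] \<beta>1[of a]] g]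
      by (simp add: \<kappa>_def comp_def)
    show "\<kappa> b a = - \<kappa> a b" for a b
      using lin_map_simps(3)[OF g, of "\<beta> a b - \<beta> b a"] by (simp add: \<kappa>_def)
    show "Gamma br (\<kappa> a b) = \<beta> a b - \<beta> b a" for a b
    proof -
      obtain k1 k2 where k: "inv_sym sL br k1" "\<beta> a b = Gamma br k1"
          "inv_sym sL br k2" "\<beta> b a = Gamma br k2"
        using Z[of a b] Z[of b a] unfolding Z3_Gamma_def by blast
      hence "\<beta> a b - \<beta> b a = Gamma br (k1 - k2)"
        by (simp add: module_hom.diff[OF module_hom_Gamma])
      moreover have "inv_sym sL br (k1 - k2)"
        using module.subspace_diff[OF module_fsc2 subspace_inv_sym] k by simp
      ultimately show ?thesis
        unfolding \<kappa>_def by (intro g_section) blast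
    qed
  qed
qed

lemma alt2_lift:
  fixes \<beta> :: "'a::comm_ring_1 \<Rightarrow> 'a \<Rightarrow> 'l::ab_group_add \<Rightarrow> 'l \<Rightarrow> 'l \<Rightarrow> 'k::field"
  assumes \<beta>: "omega1_lin sA \<beta>" and B: "\<And>c. B3 sL br (\<beta> 1 c)"
  obtains \<eta> where "lin_map sA fsc2 \<eta>" "\<And>c. alt2 sL (\<eta> c)" "\<And>c. d2 br (\<eta> c) = \<beta> 1 c"
proof -
  obtain g where g_S: "\<And>v. alt2 sL (g v)" and g: "lin_map fsc3 fsc2 g"
    and g_section: "\<And>v. v \<in> d2 br ` {\<eta>. alt2 sL \<eta>} \<Longrightarrow> d2 br (g v) = v"
    by (rule linear_section_on_image[OF vector_space_fsc2 vector_space_fsc3 module_hom_d2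
        subspace_alt2]) auto
  show thesis
  proof (rule that[of "g \<circ> \<beta> 1"])
    have "lin_map sA fsc3 (\<beta> 1)"
      using \<beta> unfolding omega1_lin_def by blast
    thus "lin_map sA fsc2 (g \<circ> \<beta> 1)"
      using g by (rule lin_map_compose)
    show "alt2 sL ((g \<circ> \<beta> 1) c)" for c
      by (simp add: g_S)
    show "d2 br ((g \<circ> \<beta> 1) c) = \<beta> 1 c" for c
      using B[of c] unfolding B3_def comp_def by (intro g_section) blast
  qed
qed

lemma leibniz_cyclic_sum:
  fixes \<beta> :: "'a::comm_ring_1 \<Rightarrow> 'a \<Rightarrow> 'v::ab_group_add"
  assumes leibniz: "\<And>a b c. \<beta> a (b * c) = \<beta> (a * b) c + \<beta> (a * c) b"
  shows "(\<beta> (a * b) c - \<beta> c (a * b)) + (\<beta> (b * c) a - \<beta> a (b * c))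
    + (\<beta> (c * a) b - \<beta> b (c * a)) + \<beta> 1 (a * b * c) = 0"
proof -
  have "\<beta> 1 (a * b * c) = \<beta> (a * b) c + \<beta> c (a * b)"
    using leibniz[of 1 "a * b" c] by simp
  moreover have "\<beta> c (a * b) = \<beta> (c * a) b + \<beta> (b * c) a"
    using leibniz[of c a b] by (simp add: mult.commute[of c b])
  moreover have "\<beta> a (b * c) = \<beta> (a * b) c + \<beta> (c * a) b"
    using leibniz[of a b c] by (simp add: mult.commute[of a c])
  moreover have "\<beta> b (c * a) = \<beta> (b * c) a + \<beta> (a * b) c"
    using leibniz[of b c a] by (simp add: mult.commute[of b a])
  ultimately show ?thesis
    by (simp add: algebra_simps)
qed

lemma lifts_cyclic_sum:
  fixes \<kappa> :: "'a::comm_ring_1 \<Rightarrow> 'a \<Rightarrow> 'l::ab_group_add \<Rightarrow> 'l \<Rightarrow> 'k::field"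
  assumes k: "lie_algebra sL br"
    and leibniz: "\<And>a b c. \<beta> a (b * c) = \<beta> (a * b) c + \<beta> (a * c) b"
    and \<kappa>_inv: "\<And>a b. inv_sym sL br (\<kappa> a b)"
    and \<kappa>_Gamma: "\<And>a b. Gamma br (\<kappa> a b) = \<beta> a b - \<beta> b a"
    and \<eta>_alt: "\<And>c. alt2 sL (\<eta> c)" and \<eta>_d2: "\<And>c. d2 br (\<eta> c) = \<beta> 1 c"
  shows "(\<kappa> (a * b) c (br x y) z - \<eta> (a * b * c) (br x y) z)
    + (\<kappa> (b * c) a (br y z) x - \<eta> (b * c * a) (br y z) x)
    + (\<kappa> (c * a) b (br z x) y - \<eta> (c * a * b) (br z x) y) = 0"
proof -
  have \<kappa>_cyclic: "\<kappa> a' b' (br y' z') x' = \<kappa> a' b' (br x' y') z'" for a' b' x' y' z'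
  proof -
    have "\<kappa> a' b' (br y' z') x' = \<kappa> a' b' x' (br y' z')"
      using \<kappa>_inv unfolding inv_sym_def by blast
    also have "\<dots> = \<kappa> a' b' (br x' y') z'"
      using \<kappa>_inv unfolding inv_sym_def by metis
    finally show ?thesis .
  qed
  have \<kappa>_eval: "\<kappa> a' b' (br x y) z = \<beta> a' b' x y z - \<beta> b' a' x y z" for a' b'
    using fun_cong[OF fun_cong[OF fun_cong[OF \<kappa>_Gamma]], of a' b' x y z] by (simp add: Gamma_def)
  define m where "m = a * b * c"
  have "\<eta> m (br z x) y = - \<eta> m (br x z) y"
  proof -
    have "bilin sL sL (\<eta> m)"
      using \<eta>_alt unfolding alt2_def by blast
    thus ?thesis
      using lie_algebra_antisym[OF k, of z x] by (simp add: bilin_simps(3))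
  qed
  hence \<eta>_cyclic: "\<eta> m (br x y) z + \<eta> m (br y z) x + \<eta> m (br z x) y = - \<beta> 1 m x y z"
    using fun_cong[OF fun_cong[OF fun_cong[OF \<eta>_d2]], of m x y z] unfolding d2_def by algebra
  have "a * b * c = m" "b * c * a = m" "c * a * b = m"
    by (simp_all add: m_def ac_simps)
  hence "(\<kappa> (a * b) c (br x y) z - \<eta> (a * b * c) (br x y) z)
      + (\<kappa> (b * c) a (br y z) x - \<eta> (b * c * a) (br y z) x)
      + (\<kappa> (c * a) b (br z x) y - \<eta> (c * a * b) (br z x) y)
      = \<kappa> (a * b) c (br x y) z + \<kappa> (b * c) a (br x y) z + \<kappa> (c * a) b (br x y) z
        - (\<eta> m (br x y) z + \<eta> m (br y z) x + \<eta> m (br z x) y)"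
    using \<kappa>_cyclic[of "b * c" a y z x] \<kappa>_cyclic[of "c * a" b z x y] \<kappa>_cyclic[of "c * a" b y z x]
    by (simp add: algebra_simps)
  also have "\<dots> = ((\<beta> (a * b) c - \<beta> c (a * b)) + (\<beta> (b * c) a - \<beta> a (b * c))
      + (\<beta> (c * a) b - \<beta> b (c * a)) + \<beta> 1 m) x y z"
    unfolding \<kappa>_eval \<eta>_cyclic by simp
  also have "\<dots> = 0"
    unfolding m_def leibniz_cyclic_sum[where \<beta> = \<beta>, OF leibniz, of a b c] by simp
  finally show ?thesis .
qed

lemma g_Z2_of_lifts:
  fixes \<kappa> :: "'a::comm_ring_1 \<Rightarrow> 'a \<Rightarrow> 'l::ab_group_add \<Rightarrow> 'l \<Rightarrow> 'k::field"
  assumes A: "comm_algebra sA" and k: "lie_algebra sL br"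
    and leibniz: "\<And>a b c. \<beta> a (b * c) = \<beta> (a * b) c + \<beta> (a * c) b"
    and \<kappa>_inv: "\<And>a b. inv_sym sL br (\<kappa> a b)"
    and \<kappa>_lin1: "\<And>b. lin_map sA fsc2 (\<lambda>a. \<kappa> a b)" and \<kappa>_lin2: "\<And>a. lin_map sA fsc2 (\<kappa> a)"
    and \<kappa>_anti: "\<And>a b. \<kappa> b a = - \<kappa> a b"
    and \<kappa>_Gamma: "\<And>a b. Gamma br (\<kappa> a b) = \<beta> a b - \<beta> b a"
    and \<eta>_lin: "lin_map sA fsc2 \<eta>" and \<eta>_alt: "\<And>c. alt2 sL (\<eta> c)"
    and \<eta>_d2: "\<And>c. d2 br (\<eta> c) = \<beta> 1 c"
  shows "g_Z2 sA sL br (\<lambda>a x b y. \<kappa> a b x y - \<eta> (a * b) x y)"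
    (is "g_Z2 sA sL br ?F")
proof -
  have \<kappa>_bilin: "bilin sL sL (\<kappa> a b)" and \<eta>_bilin: "bilin sL sL (\<eta> c)" for a b c
    using \<kappa>_inv \<eta>_alt unfolding inv_sym_def alt2_def by blast+
  have "quadlin sA sL ?F"
    unfolding quadlin_def lin_map_def
    by (simp add: lin_map_simps(1,2)[OF \<kappa>_lin1] lin_map_simps(1,2)[OF \<kappa>_lin2]
        lin_map_simps(1,2)[OF \<eta>_lin] bilin_simps[OF \<kappa>_bilin] bilin_simps[OF \<eta>_bilin]
        comm_algebra_scale_mult[OF A] fsc2_def algebra_simps)
  moreover have "?F a x b y = - ?F b y a x" for a x b y
  proof -
    have "\<kappa> a b y x = \<kappa> a b x y"
      using \<kappa>_inv unfolding inv_sym_def by blast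
    thus ?thesis
      using \<kappa>_anti[of b a] alt2_antisym[OF \<eta>_alt, of "a * b" y x] by (simp add: mult.commute[of b a])
  qed
  moreover have "?F (a * b) (br x y) c z + ?F (b * c) (br y z) a x + ?F (c * a) (br z x) b y = 0"
    for a x b y c z
    using lifts_cyclic_sum[where \<kappa> = \<kappa> and \<eta> = \<eta> and \<beta> = \<beta>, OF k leibniz \<kappa>_inv \<kappa>_Gamma \<eta>_alt \<eta>_d2]
    by simp
  ultimately show ?thesis
    unfolding g_Z2_def g_alt2_def by blast
qed

lemma Psi_eq_of_lifts:
  fixes \<kappa> :: "'a::comm_ring_1 \<Rightarrow> 'a \<Rightarrow> 'l::ab_group_add \<Rightarrow> 'l \<Rightarrow> 'k::field"
  assumes two: "(2::'k) \<noteq> 0"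
    and \<kappa>_inv: "\<And>a b. inv_sym sL br (\<kappa> a b)"
    and \<kappa>_Gamma: "\<And>a b. Gamma br (\<kappa> a b) = \<beta> a b - \<beta> b a"
    and \<eta>_alt: "\<And>c. alt2 sL (\<eta> c)"
  shows "Psi_eq br (\<lambda>a x b y. \<kappa> a b x y - \<eta> (a * b) x y) \<beta>"
  unfolding Psi_eq_iff
proof (intro allI)
  fix a b x y z
  have "\<kappa> a b z (br x y) = \<kappa> a b (br x y) z"
    using \<kappa>_inv unfolding inv_sym_def by blast
  moreover have "\<eta> (a * b) z (br x y) = - \<eta> (a * b) (br x y) z"
    by (rule alt2_antisym[OF \<eta>_alt])
  ultimately have "(\<kappa> a b (br x y) z - \<eta> (a * b) (br x y) z + (\<kappa> a b z (br x y) - \<eta> (a * b) z (br x y))) / 2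
      = \<kappa> a b (br x y) z"
    using half_add_self[OF two] by simp
  also have "\<dots> = \<beta> a b x y z - \<beta> b a x y z"
    using fun_cong[OF fun_cong[OF fun_cong[OF \<kappa>_Gamma]], of a b x y z] by (simp add: Gamma_def)
  finally show "\<beta> a b x y z - \<beta> b a x y z
      = (\<kappa> a b (br x y) z - \<eta> (a * b) (br x y) z + (\<kappa> a b z (br x y) - \<eta> (a * b) z (br x y))) / 2"
    by simp
qed

lemma Psi_surjective:
  assumes two: "(2::'k::field) \<noteq> 0"
    and A: "comm_algebra sA"
    and k: "lie_algebra sL br"
    and \<beta>: "omega1_target sA sL br (\<beta> :: 'a::comm_ring_1 \<Rightarrow> 'a \<Rightarrow> 'l::ab_group_add \<Rightarrow> 'l \<Rightarrow> 'l \<Rightarrow> 'k)"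
  shows "\<exists>F. g_Z2 sA sL br F \<and> Psi_eq br F \<beta>"
proof -
  have \<beta>_lin: "omega1_lin sA \<beta>" and Z: "\<And>a b. Z3_Gamma sL br (\<beta> a b)"
    and B: "\<And>c. B3 sL br (\<beta> 1 c)"
    using \<beta> unfolding omega1_target_def B3_Gamma_def by blast+
  have leibniz: "\<And>a b c. \<beta> a (b * c) = \<beta> (a * b) c + \<beta> (a * c) b"
    using \<beta>_lin unfolding omega1_lin_def by blast
  obtain \<kappa> where \<kappa>: "\<And>a b. inv_sym sL br (\<kappa> a b)"
    "\<And>b. lin_map sA fsc2 (\<lambda>a. \<kappa> a b)" "\<And>a. lin_map sA fsc2 (\<kappa> a)"
    "\<And>a b. \<kappa> b a = - \<kappa> a b" "\<And>a b. Gamma br (\<kappa> a b) = \<beta> a b - \<beta> b a"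
    by (rule inv_sym_lift[OF \<beta>_lin Z]) blast
  obtain \<eta> where \<eta>: "lin_map sA fsc2 \<eta>" "\<And>c. alt2 sL (\<eta> c)" "\<And>c. d2 br (\<eta> c) = \<beta> 1 c"
    by (rule alt2_lift[OF \<beta>_lin B]) blast
  have "Psi_eq br (\<lambda>a x b y. \<kappa> a b x y - \<eta> (a * b) x y) \<beta>"
    using two \<kappa>(1,5) \<eta>(2) by (rule Psi_eq_of_lifts)
  thus ?thesis
    using g_Z2_of_lifts[OF A k leibniz \<kappa> \<eta>] by blast
qed

theorem theorem4p2:
  fixes sA :: "'k::field \<Rightarrow> 'a::comm_ring_1 \<Rightarrow> 'a"
    and sL :: "'k \<Rightarrow> 'l::ab_group_add \<Rightarrow> 'l"
    and br :: "'l \<Rightarrow> 'l \<Rightarrow> 'l"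
  assumes two: "(2::'k) \<noteq> 0"
    and A: "comm_algebra sA"
    and k: "lie_algebra sL br"
  shows
    \<comment> \<open>exactness at the left term: Phi is injective\<close>
    "(\<forall>W \<phi>. alt13 sA sL br W \<and> H2_lift sA sL br \<phi> \<and> g_B2 sA sL br (Phi_rep W \<phi>) \<longrightarrow>
        W = (\<lambda>a x b y. 0) \<and> (\<forall>a. B2 sL br (\<phi> a)))
     \<and>
     \<comment> \<open>exactness in the middle: ker Psi = im Phi\<close>
     (\<forall>F. g_Z2 sA sL br F \<longrightarrow>
        (Psi_eq br F (\<lambda>a b. (\<lambda>x y z. 0)) \<longleftrightarrow>
         (\<exists>W \<phi>. alt13 sA sL br W \<and> H2_lift sA sL br \<phi> \<and>
                 g_B2 sA sL br (\<lambda>a x b y. F a x b y - Phi_rep W \<phi> a x b y))))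
     \<and>
     \<comment> \<open>exactness at the right term: Psi is surjective\<close>
     (\<forall>\<beta>. omega1_target sA sL br \<beta> \<longrightarrow> (\<exists>F. g_Z2 sA sL br F \<and> Psi_eq br F \<beta>))"
proof -
  have Phi_injective: "W = (\<lambda>a x b y. 0) \<and> (\<forall>a. B2 sL br (\<phi> a))"
    if "alt13 sA sL br W" "g_B2 sA sL br (Phi_rep W \<phi>)" for W \<phi>
    using that Phi_rep_coboundary_imp_trivial[OF two] unfolding alt13_def by blast
  show ?thesis
    using Phi_injective ker_Psi_in_im_Phi[OF two A k] Psi_eq_0_if_cohomologous_to_Phi_rep[OF two k]
      Psi_surjective[OF two A k]
    by blast
qed

end
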